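(* Assume $\beta_x=0$ for all $x\in\Gamma$. Let $v:\Gamma\to\mathbb C$ satisfy $(Jv)(x)=iv(x)$ for all $x\in\Gamma$ and $v(x_0)=1$ for some vertex $x_0$ with $\ell(x_0)=0$. Then $\tilde v(x)=i^{-\ell(x)}v(x)$ is a real and strictly positive number for every $x\in\Gamma$.
   Context: Let $\Gamma$ be an infinite connected tree whose vertices are arranged in levels $\ell(x)\in\{0,1,2,\dots\}$: every vertex $x$ is adjacent to exactly one vertex $x'$ with $\ell(x')=\ell(x)+1$; for $\ell(x)\ge 1$ the set $N_x=\{y:\ y'=x\}$ of neighbours of $x$ on level $\ell(x)-1$ is finite and nonempty; $N_x=\emptyset$ if $\ell(x)=0$; there are no other edges. Fix $\lambda_x>0$, $\beta_x\in\mathbb R$. The Jacobi matrix $J$ acts on functions $v:\Gamma\to\mathbb C$ by $(Jv)(x)=\lambda_x v(x')+\beta_x v(x)+\sum_{y\in N_x}\lambda_y v(y)$. *)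

theory Defs
  imports Complex_Main
begin

text \<open>The vertex set Gamma is the whole type 'a. lev x is the level of x,
  up x is the unique neighbour x' of x on level lev x + 1.
  The edges are exactly the pairs {x, up x}.\<close>

definition children :: "('a \<Rightarrow> 'a) \<Rightarrow> 'a \<Rightarrow> 'a set" where
  "children up x = {y. up y = x}"

definition level_tree :: "('a \<Rightarrow> nat) \<Rightarrow> ('a \<Rightarrow> 'a) \<Rightarrow> bool" where
  "level_tree lev up \<longleftrightarrow>
     infinite (UNIV :: 'a set) \<and>
     (\<forall>x. lev (up x) = lev x + 1) \<and>
     (\<forall>x. lev x \<ge> 1 \<longrightarrow> finite (children up x) \<and> children up x \<noteq> {}) \<and>
     (\<forall>x. lev x = 0 \<longrightarrow> children up x = {}) \<and>
     (\<forall>x y. \<exists>m n. (up ^^ m) x = (up ^^ n) y)"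

definition jacobi :: "('a \<Rightarrow> 'a) \<Rightarrow> ('a \<Rightarrow> real) \<Rightarrow> ('a \<Rightarrow> real) \<Rightarrow> ('a \<Rightarrow> complex) \<Rightarrow> 'a \<Rightarrow> complex" where
  "jacobi up lam beta v x =
     of_real (lam x) * v (up x) + of_real (beta x) * v x
     + (\<Sum>y\<in>children up x. of_real (lam y) * v y)"

end

theory Submission
  imports Defs
begin

text \<open>Write \<open>w x = i^-lev x * v x\<close>. Since children lie one level below their parent, the phases
  cancel and the eigenvalue equation becomes the real-coefficient recursion
  \<open>lam x * w (up x) = w x + (\<Sum>y\<in>children x. lam y * w y)\<close>. By induction on the level,
  every \<open>w z\<close> is a positive multiple of each child value \<open>w c\<close>, so the right-hand side
  is a positive multiple of \<open>w x\<close>, and hence so is \<open>w (up x)\<close>. Any two vertices have a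
  common ancestor, so every \<open>w x\<close> is a positive multiple of \<open>w x0 = 1\<close>.\<close>

definition untwist :: "('a \<Rightarrow> nat) \<Rightarrow> ('a \<Rightarrow> complex) \<Rightarrow> 'a \<Rightarrow> complex" where
  "untwist lev v x = inverse (\<i> ^ lev x) * v x"

lemma child_level:
  fixes lev :: "'a \<Rightarrow> nat"
  assumes "\<And>x. lev (up x) = lev x + 1" and "y \<in> children up x"
  shows "lev x = lev y + 1"
  using assms by (auto simp: children_def)

lemma untwist_eigen_equation:
  assumes levup: "\<And>x. lev (up x) = lev x + 1"
    and beta: "\<forall>x. beta x = 0"
    and eigen: "jacobi up lam beta v x = \<i> * v x"
  shows "of_real (lam x) * untwist lev v (up x)
           = untwist lev v x + (\<Sum>y\<in>children up x. of_real (lam y) * untwist lev v y)"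
proof -
  let ?w = "untwist lev v" and ?p = "\<i> ^ (lev x + 1)"
  have v_eq: "v z = \<i> ^ lev z * ?w z" for z
    by (simp add: untwist_def)
  have child_phase: "\<i> ^ lev y = - ?p" if "y \<in> children up x" for y
  proof -
    have "?p = \<i> ^ lev y * \<i>\<^sup>2"
      using child_level[of lev up, OF levup that] by (simp add: power_add)
    then show ?thesis by simp
  qed
  have "of_real (lam x) * v (up x) + (\<Sum>y\<in>children up x. of_real (lam y) * v y) = \<i> * v x"
    using eigen beta by (simp add: jacobi_def)
  moreover have "(\<Sum>y\<in>children up x. of_real (lam y) * v y)
                   = ?p * - (\<Sum>y\<in>children up x. of_real (lam y) * ?w y)"
    unfolding sum_distrib_left sum_negf[symmetric]
    by (rule sum.cong) (simp_all add: v_eq child_phase)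
  moreover have "v (up x) = ?p * ?w (up x)" and "\<i> * v x = ?p * ?w x"
    using v_eq levup by simp_all
  ultimately have "?p * (of_real (lam x) * ?w (up x) - (\<Sum>y\<in>children up x. of_real (lam y) * ?w y))
                     = ?p * ?w x"
    by (simp add: algebra_simps)
  then have "of_real (lam x) * ?w (up x) - (\<Sum>y\<in>children up x. of_real (lam y) * ?w y) = ?w x"
    by simp
  then show ?thesis by (simp add: algebra_simps)
qed

lemma up_positive_multiple:
  fixes lev :: "'a \<Rightarrow> nat" and w :: "'a \<Rightarrow> complex"
  assumes levup: "\<And>x. lev (up x) = lev x + 1"
    and lam_pos: "\<And>x. lam x > 0"
    and recursion: "\<And>x. of_real (lam x) * w (up x) = w x + (\<Sum>y\<in>children up x. of_real (lam y) * w y)"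
  shows "\<exists>a>0. w (up z) = of_real a * w z"
proof (induction "lev z" arbitrary: z rule: less_induct)
  case less
  have "\<exists>a>0. w z = of_real a * w c" if "c \<in> children up z" for c
  proof -
    have "up c = z" using that by (simp add: children_def)
    then show ?thesis using less levup[of c] by force
  qed
  then obtain a where a_pos: "\<And>c. c \<in> children up z \<Longrightarrow> a c > 0"
    and a_ratio: "\<And>c. c \<in> children up z \<Longrightarrow> w z = of_real (a c) * w c"
    by metis
  define s where "s = (\<Sum>y\<in>children up z. lam y / a y)"
  have "(\<Sum>y\<in>children up z. of_real (lam y) * w y) = (\<Sum>y\<in>children up z. of_real (lam y / a y) * w z)"
  proof (rule sum.cong)
    fix y assume "y \<in> children up z"
    with a_pos a_ratio show "of_real (lam y) * w y = of_real (lam y / a y) * w z"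
      by force
  qed simp
  also have "\<dots> = of_real s * w z"
    by (simp add: s_def sum_distrib_right)
  finally have "of_real (lam z) * w (up z) = of_real (1 + s) * w z"
    using recursion[of z] by (simp add: algebra_simps)
  then have "w (up z) = of_real ((1 + s) / lam z) * w z"
    using lam_pos[of z] by (simp add: field_simps)
  moreover have "s \<ge> 0"
    unfolding s_def using a_pos lam_pos by (intro sum_nonneg) (simp add: less_imp_le)
  then have "(1 + s) / lam z > 0"
    using lam_pos[of z] by simp
  ultimately show ?case by blast
qed

lemma funpow_positive_multiple:
  fixes w :: "'a \<Rightarrow> complex"
  assumes "\<And>z. \<exists>a>0. w (f z) = of_real a * w z"
  shows "\<exists>a>0. w ((f ^^ n) z) = of_real a * w z"
proof (induction n)
  case 0
  show ?case by (intro exI[of _ 1]) simp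
next
  case (Suc n)
  then obtain a where "a > 0" "w ((f ^^ n) z) = of_real a * w z" by blast
  moreover obtain b where "b > 0" "w (f ((f ^^ n) z)) = of_real b * w ((f ^^ n) z)"
    using assms by blast
  ultimately show ?case by (intro exI[of _ "b * a"]) simp
qed

theorem lemma4:
  fixes lev :: "'a \<Rightarrow> nat" and up :: "'a \<Rightarrow> 'a"
    and lam beta :: "'a \<Rightarrow> real" and v :: "'a \<Rightarrow> complex" and x0 :: 'a
  assumes "level_tree lev up"
    and "\<forall>x. lam x > 0"
    and "\<forall>x. beta x = 0"
    and "\<forall>x. jacobi up lam beta v x = \<i> * v x"
    and "lev x0 = 0" and "v x0 = 1"
  shows "\<forall>x. inverse (\<i> ^ lev x) * v x \<in> \<real> \<and> Re (inverse (\<i> ^ lev x) * v x) > 0"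
proof
  fix x
  let ?w = "untwist lev v"
  have levup: "\<And>x. lev (up x) = lev x + 1"
    and common_ancestor: "\<exists>m n. (up ^^ m) x = (up ^^ n) x0"
    using assms(1) unfolding level_tree_def by blast+
  have recursion: "of_real (lam z) * ?w (up z) = ?w z + (\<Sum>y\<in>children up z. of_real (lam y) * ?w y)" for z
    using assms(3,4) levup by (intro untwist_eigen_equation) auto
  have "\<exists>a>0. ?w (up z) = of_real a * ?w z" for z
    using up_positive_multiple[of lev up lam, OF levup _ recursion] assms(2) by blast
  then have "\<exists>a>0. ?w ((up ^^ n) z) = of_real a * ?w z" for n z
    by (rule funpow_positive_multiple)
  moreover obtain m n where "(up ^^ m) x = (up ^^ n) x0"
    using common_ancestor by blast
  ultimately obtain a b where "a > 0" "b > 0" "of_real a * ?w x = of_real b * ?w x0"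
    by metis
  moreover have "?w x0 = 1"
    using assms(5,6) by (simp add: untwist_def)
  ultimately have "?w x = of_real (b / a)" and "b / a > 0"
    by (simp_all add: field_simps)
  then show "inverse (\<i> ^ lev x) * v x \<in> \<real> \<and> Re (inverse (\<i> ^ lev x) * v x) > 0"
    by (simp add: untwist_def)
qed

end
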